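(* Let $(X_n,\|\cdot\|_n)_{n\ge1}$ be a sequence of Banach spaces and $(X,\|\cdot\|)$ the space defined in the context. Let $(x_m)_{m\ge1}$ be a bounded sequence in $X$ and $x\in X\setminus\{0\}$ with $x_m\overset{p}{\to}x$. Then there exists an infinite subset $M\subseteq\mathbb{N}$ such that the norms of the vectors of the set $\{x_m:m\in M\}\cup\{x\}$ have the same representation.
   Context: $c_{00}((X_n))$ is the vector space of sequences $(x_1,x_2,\dots)$ with $x_k\in X_k$ and only finitely many $x_k\ne0$; $(x_1,\dots,x_n)$ denotes $(x_1,\dots,x_n,0,0,\dots)$. On $c_{00}((X_n))$ define inductively $\|(x_1)\|=\|x_1\|_1$ (the norm of $X_1$) and, for $n\ge2$, $$\|(x_1,\dots,x_n)\|=\Big(1-\tfrac{1}{n+1}\Big)\big(\|x_n\|_n+\|(x_1,\dots,x_{n-1})\|\big)+\tfrac{1}{n+1}\max\Big\{\tfrac{\|x_n\|_n}{n},\ \|(x_1,\dots,x_{n-1})\|\Big\}.$$ $X$ is the completion of $(c_{00}((X_n)),\|\cdot\|)$, identified with the space of sequences $x=(x_n)$, $x_n\in X_n$, with $\sum_n\|x_n\|_n<\infty$, where $\|x\|=\lim_k\|(x_1,\dots,x_k)\|$. For a sequence $x_m=(x_{m1},x_{m2},\dots)\in X$ and $x=(x_1,x_2,\dots)\in X$, write $x_m\overset{p}{\to}x$ (pointwise convergence) if $\|x_{mn}-x_n\|_n\to0$ as $m\to\infty$ for every $n\in\mathbb{N}$. Two vectors $x=(x_n),y=(y_n)\in X$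 have norms with the same representation if there exist sequences $(d_n)_{n\ge1},(s_n)_{n\ge1}\subseteq(0,1]$ with $\|x\|=\sum_n d_n\|x_n\|_n$, $\|y\|=\sum_n s_n\|y_n\|_n$ and $d_n=s_n$ for every $n$; the norms of the vectors of a set have the same representation if there is a single sequence $(d_n)\subseteq(0,1]$ with $\|z\|=\sum_n d_n\|z_n\|_n$ for every $z$ in the set. *)

theory Defs
  imports "HOL-Analysis.Analysis"
begin

text \<open>The spaces X_n (n \<ge> 1) are modelled as closed linear subspaces S n of one
  ambient Banach space 'a (every countable family of Banach spaces embeds
  isometrically this way, e.g. into its l-infinity sum). Vectors of X are
  sequences z :: nat \<Rightarrow> 'a indexed from 1 (z 0 = 0), with z n \<in> S n.\<close>

definition banach_family :: "(nat \<Rightarrow> 'a::banach set) \<Rightarrow> bool" where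
  "banach_family S \<longleftrightarrow> (\<forall>n\<ge>1. subspace (S n) \<and> closed (S n))"

text \<open>tnorm z k = norm of the truncation (z 1, ..., z k, 0, 0, ...).\<close>
fun tnorm :: "(nat \<Rightarrow> 'a::real_normed_vector) \<Rightarrow> nat \<Rightarrow> real" where
  "tnorm z 0 = 0"
| "tnorm z (Suc 0) = norm (z 1)"
| "tnorm z (Suc (Suc k)) =
     (1 - 1 / real (Suc (Suc k) + 1)) * (norm (z (Suc (Suc k))) + tnorm z (Suc k))
     + 1 / real (Suc (Suc k) + 1) * max (norm (z (Suc (Suc k))) / real (Suc (Suc k))) (tnorm z (Suc k))"

definition Xspace :: "(nat \<Rightarrow> 'a::banach set) \<Rightarrow> (nat \<Rightarrow> 'a) set" where
  "Xspace S = {z. z 0 = 0 \<and> (\<forall>n\<ge>1. z n \<in> S n) \<and> summable (\<lambda>n. norm (z n))}"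

definition Xnorm :: "(nat \<Rightarrow> 'a::real_normed_vector) \<Rightarrow> real" where
  "Xnorm z = lim (\<lambda>k. tnorm z k)"

definition pconv :: "(nat \<Rightarrow> nat \<Rightarrow> 'a::real_normed_vector) \<Rightarrow> (nat \<Rightarrow> 'a) \<Rightarrow> bool" where
  "pconv xs x \<longleftrightarrow> (\<forall>n\<ge>1. (\<lambda>m. norm (xs m n - x n)) \<longlonglongrightarrow> 0)"

definition same_repr :: "(nat \<Rightarrow> 'a::real_normed_vector) set \<Rightarrow> bool" where
  "same_repr A \<longleftrightarrow> (\<exists>d::nat \<Rightarrow> real. (\<forall>n\<ge>1. 0 < d n \<and> d n \<le> 1) \<and>
       (\<forall>z\<in>A. (\<lambda>n. if n = 0 then 0 else d n * norm (z n)) sums Xnorm z))"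

end

theory Submission
  imports Defs
begin

text \<open>Each step of the recursion for the truncated norms is affine in the new coordinate
  norm and the previous truncated norm, with coefficients depending only on which argument of
  the max is larger. Recording these choices in a pattern p, every vector following p has
  its norm represented with weights determined by p alone. For the x_m with m large, the
  tail choices are forced: the coordinates are uniformly bounded, so norm (x_m k) / k is
  eventually below a uniform positive lower bound of the truncated norms, which exists
  because x \<noteq> 0 and the truncated norms converge pointwise. Only finitely many patterns
  remain, so one of them is shared by infinitely many x_m, and it is inherited by x since
  following a pattern is a closed condition.\<close>

lemma tnorm_Suc_Suc: "tnorm z (Suc (Suc k)) =
     (1 - 1 / (real k + 3)) * (norm (z (Suc (Suc k))) + tnorm z (Suc k))
     + 1 / (real k + 3) * max (norm (z (Suc (Suc k))) / (real k + 2)) (tnorm z (Suc k))"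
  by (simp add: add.commute)

lemma tnorm_nonneg: "0 \<le> tnorm z k"
proof (induction z k rule: tnorm.induct)
  case (3 z k)
  have "0 \<le> 1 - 1 / (real k + 3)" by (simp add: field_simps)
  then show ?case
    unfolding tnorm_Suc_Suc using 3 by (intro add_nonneg_nonneg mult_nonneg_nonneg) auto
qed auto

lemma tnorm_incseq: "incseq (tnorm z)"
proof (rule incseq_SucI)
  fix k
  show "tnorm z k \<le> tnorm z (Suc k)"
  proof (cases k)
    case (Suc j)
    let ?a = "norm (z (Suc (Suc j)))" and ?b = "tnorm z (Suc j)" and ?N = "real j + 3"
    have "?b = (1 - 1 / ?N) * (0 + ?b) + 1 / ?N * ?b" by (simp add: algebra_simps)
    also have "\<dots> \<le> (1 - 1 / ?N) * (?a + ?b) + 1 / ?N * max (?a / (real j + 2)) ?b"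
      by (intro add_mono mult_left_mono) (auto simp: field_simps)
    finally show ?thesis using Suc by (simp only: tnorm_Suc_Suc)
  qed simp
qed

lemma tnorm_le_sum: "tnorm z k \<le> (\<Sum>n<Suc k. norm (z n))"
proof (induction z k rule: tnorm.induct)
  case (3 z k)
  let ?a = "norm (z (Suc (Suc k)))" and ?b = "tnorm z (Suc k)" and ?N = "real k + 3"
  have "max (?a / (real k + 2)) ?b \<le> ?a + ?b"
    using tnorm_nonneg[of z "Suc k"] by (auto simp: field_simps)
  then have "tnorm z (Suc (Suc k)) \<le> (1 - 1 / ?N) * (?a + ?b) + 1 / ?N * (?a + ?b)"
    unfolding tnorm_Suc_Suc by (intro add_left_mono mult_left_mono) auto
  also have "\<dots> = ?a + ?b" by (simp add: algebra_simps)
  finally show ?case using 3 by simp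
qed auto

lemma norm_le_tnorm:
  assumes "k \<ge> 1"
  shows "norm (z k) \<le> 2 * tnorm z k"
proof (cases "k = 1")
  case False
  then obtain j where k: "k = Suc (Suc j)" using assms by (metis One_nat_def Suc_pred' less_one not_le not0_implies_Suc)
  let ?a = "norm (z k)" and ?b = "tnorm z (Suc j)" and ?N = "real j + 3"
  have "?a \<le> 2 * ((1 - 1 / ?N) * (?a + ?b))"
    using tnorm_nonneg[of z "Suc j"] by (simp add: field_simps)
  also have "\<dots> \<le> 2 * ((1 - 1 / ?N) * (?a + ?b) + 1 / ?N * max (?a / (real j + 2)) ?b)"
    using tnorm_nonneg[of z "Suc j"] by (simp add: max_def)
  finally show ?thesis using k by (simp only: tnorm_Suc_Suc)
qed simp

lemma tnorm_tendsto_Xnorm: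
  assumes "summable (\<lambda>n. norm (z n))"
  shows "tnorm z \<longlonglongrightarrow> Xnorm z"
proof -
  have "tnorm z k \<le> suminf (\<lambda>n. norm (z n))" for k
    using tnorm_le_sum[of z k] sum_le_suminf[OF assms, of "{..<Suc k}"] by fastforce
  then obtain L where "tnorm z \<longlonglongrightarrow> L"
    using incseq_convergent[OF tnorm_incseq] by blast
  then show ?thesis unfolding Xnorm_def by (simp add: limI)
qed

lemma tnorm_le_Xnorm: "summable (\<lambda>n. norm (z n)) \<Longrightarrow> tnorm z k \<le> Xnorm z"
  by (rule incseq_le[OF tnorm_incseq tnorm_tendsto_Xnorm])

lemma pconv_coordinate: "pconv xs x \<Longrightarrow> n \<ge> 1 \<Longrightarrow> (\<lambda>m. xs m n) \<longlonglongrightarrow> x n"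
  unfolding pconv_def by (simp add: tendsto_norm_zero_iff LIM_zero_iff)

lemma tnorm_tendsto_pconv:
  assumes "pconv xs x"
  shows "(\<lambda>m. tnorm (xs m) k) \<longlonglongrightarrow> tnorm x k"
proof -
  note coord = pconv_coordinate[OF assms]
  show ?thesis
  proof (induction k rule: induct_nat_012)
    case (ge2 k)
    show ?case
      unfolding tnorm_Suc_Suc using ge2 coord[of "Suc (Suc k)"] by (intro tendsto_intros) auto
  qed (use coord[of 1] in \<open>auto intro: tendsto_norm\<close>)
qed

definition follows_pattern :: "(nat \<Rightarrow> bool) \<Rightarrow> (nat \<Rightarrow> 'a::real_normed_vector) \<Rightarrow> bool" where
  "follows_pattern p z \<longleftrightarrow> (\<forall>k\<ge>2.
     (p k \<longrightarrow> tnorm z (k - 1) \<le> norm (z k) / real k) \<and>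
     (\<not> p k \<longrightarrow> norm (z k) / real k \<le> tnorm z (k - 1)))"

definition new_coeff :: "(nat \<Rightarrow> bool) \<Rightarrow> nat \<Rightarrow> real" where
  "new_coeff p n = (if n \<le> 1 then 1
     else if p n then (real n ^ 2 + 1) / (real n * (real n + 1)) else real n / (real n + 1))"

definition carry_coeff :: "(nat \<Rightarrow> bool) \<Rightarrow> nat \<Rightarrow> real" where
  "carry_coeff p n = (if p n then real n / (real n + 1) else 1)"

lemma new_coeff_pos: "0 < new_coeff p n"
  by (simp add: new_coeff_def add_pos_nonneg)

lemma new_coeff_le_1: "new_coeff p n \<le> 1"
proof -
  have "real n ^ 2 + 1 \<le> real n * (real n + 1)" if "\<not> n \<le> 1"
    using that by (simp add: power2_eq_square algebra_simps)
  then show ?thesis by (simp add: new_coeff_def)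
qed

lemma carry_coeff_pos: "0 < n \<Longrightarrow> 0 < carry_coeff p n"
  by (simp add: carry_coeff_def)

lemma tnorm_rec:
  assumes "n \<ge> 2"
  shows "tnorm z n = (1 - 1 / (real n + 1)) * (norm (z n) + tnorm z (n - 1))
    + 1 / (real n + 1) * max (norm (z n) / real n) (tnorm z (n - 1))"
proof -
  obtain k where "n = Suc (Suc k)" using assms by (metis add_2_eq_Suc le_Suc_ex)
  then show ?thesis by simp
qed

lemma tnorm_pattern_step:
  assumes "follows_pattern p z" "n \<ge> 2"
  shows "tnorm z n = new_coeff p n * norm (z n) + carry_coeff p n * tnorm z (n - 1)"
proof -
  let ?a = "norm (z n)" and ?b = "tnorm z (n - 1)"
  have n: "real n > 0" "\<not> n \<le> 1" using assms(2) by simp_all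
  have carry: "1 - 1 / (real n + 1) = real n / (real n + 1)" using n by (simp add: field_simps)
  show ?thesis
  proof (cases "p n")
    case True
    then have max: "max (?a / real n) ?b = ?a / real n"
      using assms unfolding follows_pattern_def by auto
    show ?thesis using True n unfolding tnorm_rec[OF assms(2)] max carry
      by (simp add: new_coeff_def carry_coeff_def divide_simps power2_eq_square) (simp add: algebra_simps)
  next
    case False
    then have max: "max (?a / real n) ?b = ?b"
      using assms unfolding follows_pattern_def by auto
    show ?thesis using False n unfolding tnorm_rec[OF assms(2)] max carry
      by (simp add: new_coeff_def carry_coeff_def divide_simps) (simp add: algebra_simps)
  qed
qed

definition repr_coeff :: "(nat \<Rightarrow> bool) \<Rightarrow> nat \<Rightarrow> nat \<Rightarrow> real" where
  "repr_coeff p k n = new_coeff p n * (\<Prod>j\<in>{n<..k}. carry_coeff p j)"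

lemma repr_coeff_pos: "0 < repr_coeff p k n"
  unfolding repr_coeff_def by (intro mult_pos_pos new_coeff_pos prod_pos) (auto intro: carry_coeff_pos)

lemma repr_coeff_le_1: "repr_coeff p k n \<le> 1"
proof -
  have "(\<Prod>j\<in>{n<..k}. carry_coeff p j) \<le> 1"
    by (intro prod_le_1) (auto simp: carry_coeff_def)
  then show ?thesis
    unfolding repr_coeff_def using new_coeff_pos[of p n] new_coeff_le_1[of p n]
    by (intro mult_le_one) (auto intro: prod_nonneg simp: carry_coeff_def)
qed

lemma repr_coeff_eq_if_no_peaks:
  assumes "\<forall>j>K. \<not> p j" "K \<le> k"
  shows "repr_coeff p k n = repr_coeff p K n"
  unfolding repr_coeff_def
  by (subst prod.mono_neutral_right[of "{n<..k}" "{n<..K}"]) (use assms in \<open>auto simp: carry_coeff_def\<close>)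

lemma tnorm_pattern_sum:
  assumes "follows_pattern p z" "k \<ge> 1"
  shows "tnorm z k = (\<Sum>n=1..k. repr_coeff p k n * norm (z n))"
  using assms(2)
proof (induction k rule: nat_induct_at_least)
  case base
  then show ?case by (simp add: repr_coeff_def new_coeff_def)
next
  case (Suc k)
  have carry: "repr_coeff p (Suc k) n = carry_coeff p (Suc k) * repr_coeff p k n"
    if "n \<le> k" for n
  proof -
    have "{n<..Suc k} = insert (Suc k) {n<..k}" using that by auto
    then show ?thesis by (simp add: repr_coeff_def)
  qed
  have "tnorm z (Suc k) = new_coeff p (Suc k) * norm (z (Suc k)) + carry_coeff p (Suc k) * tnorm z k"
    using tnorm_pattern_step[OF assms(1), of "Suc k"] Suc.hyps by simp
  also have "\<dots> = repr_coeff p (Suc k) (Suc k) * norm (z (Suc k))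
      + (\<Sum>n=1..k. repr_coeff p (Suc k) n * norm (z n))"
    unfolding Suc.IH sum_distrib_left by (simp add: carry mult.assoc) (simp add: repr_coeff_def)
  also have "\<dots> = (\<Sum>n=1..Suc k. repr_coeff p (Suc k) n * norm (z n))"
    using Suc.hyps by (simp add: sum.cl_ivl_Suc)
  finally show ?case .
qed

lemma pattern_sums_Xnorm:
  assumes "follows_pattern p z" "\<forall>j>K. \<not> p j" "summable (\<lambda>n. norm (z n))"
  shows "(\<lambda>n. if n = 0 then 0 else repr_coeff p K n * norm (z n)) sums Xnorm z"
proof -
  let ?f = "\<lambda>n. if n = 0 then 0 else repr_coeff p K n * norm (z n)"
  have partial_sum: "(\<Sum>n<Suc k. ?f n) = tnorm z k" if "k \<ge> Suc K" for k
  proof -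
    have "{..<Suc k} = insert 0 {1..k}" by auto
    then have "(\<Sum>n<Suc k. ?f n) = (\<Sum>n=1..k. ?f n)" by simp
    also have "\<dots> = (\<Sum>n=1..k. repr_coeff p k n * norm (z n))"
      using repr_coeff_eq_if_no_peaks[OF assms(2), of k] that by (intro sum.cong) auto
    finally show ?thesis using tnorm_pattern_sum[OF assms(1)] that by simp
  qed
  have "eventually (\<lambda>k. tnorm z k = (\<Sum>n<Suc k. ?f n)) sequentially"
    by (rule eventually_mono[OF eventually_ge_at_top[of "Suc K"]]) (rule partial_sum[symmetric])
  from Lim_transform_eventually[OF tnorm_tendsto_Xnorm[OF assms(3)] this]
  show ?thesis unfolding sums_def by (rule LIMSEQ_imp_Suc)
qed

lemma same_repr_if_common_pattern:
  assumes "\<forall>j>K. \<not> p j" "\<forall>z\<in>A. follows_pattern p z \<and> summable (\<lambda>n. norm (z n))"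
  shows "same_repr A"
  unfolding same_repr_def using assms
  by (intro exI[of _ "repr_coeff p K"]) (auto intro: repr_coeff_pos repr_coeff_le_1 pattern_sums_Xnorm)

lemma tnorm_tail_no_peak:
  assumes "summable (\<lambda>n. norm (z n))" "Xnorm z \<le> B" "c \<le> tnorm z j" "j < k"
    and "2 * B < c * real k"
  shows "norm (z k) / real k < tnorm z (k - 1)"
proof -
  have "norm (z k) \<le> 2 * Xnorm z"
    using norm_le_tnorm[of k z] tnorm_le_Xnorm[OF assms(1), of k] assms(4) by linarith
  then have "norm (z k) / real k < c"
    using assms(2,4,5) by (simp add: divide_less_eq mult.commute)
  also have "c \<le> tnorm z (k - 1)"
    using assms(3) incseqD[OF tnorm_incseq[of z], of j "k - 1"] assms(4) by linarith
  finally show ?thesis .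
qed

lemma follows_pattern_pconv_limit:
  assumes "pconv xs x" "infinite M" "\<forall>m\<in>M. follows_pattern p (xs m)"
  shows "follows_pattern p x"
proof -
  define r where "r = enumerate M"
  have r: "strict_mono r" "\<And>i. r i \<in> M"
    using assms(2) by (simp_all add: r_def strict_mono_enumerate enumerate_in_set)
  have tnorm_r: "(\<lambda>i. tnorm (xs (r i)) (k - 1)) \<longlonglongrightarrow> tnorm x (k - 1)" for k
    using LIMSEQ_subseq_LIMSEQ[OF tnorm_tendsto_pconv[OF assms(1)] r(1)] by (simp add: o_def)
  have coord_r: "(\<lambda>i. norm (xs (r i) k) / real k) \<longlonglongrightarrow> norm (x k) / real k" if "k \<ge> 1" for k
    using LIMSEQ_subseq_LIMSEQ[OF pconv_coordinate[OF assms(1) that] r(1)]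
    by (intro tendsto_divide tendsto_norm) (use that in \<open>simp_all add: o_def\<close>)
  have pattern: "follows_pattern p (xs (r i))" for i using assms(3) r(2) by blast
  show ?thesis unfolding follows_pattern_def
  proof (intro allI impI conjI)
    fix k :: nat assume "k \<ge> 2" "p k"
    then show "tnorm x (k - 1) \<le> norm (x k) / real k"
      using pattern unfolding follows_pattern_def by (intro LIMSEQ_le[OF tnorm_r coord_r]) auto
  next
    fix k :: nat assume "k \<ge> 2" "\<not> p k"
    then show "norm (x k) / real k \<le> tnorm x (k - 1)"
      using pattern unfolding follows_pattern_def by (intro LIMSEQ_le[OF coord_r tnorm_r]) auto
  qed
qed

definition peaks_upto :: "nat \<Rightarrow> (nat \<Rightarrow> 'a::real_normed_vector) \<Rightarrow> nat set" where
  "peaks_upto K z = {k\<in>{2..K}. tnorm z (k - 1) \<le> norm (z k) / real k}"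

lemma follows_peaks_upto:
  assumes "\<forall>k>K. norm (z k) / real k \<le> tnorm z (k - 1)"
  shows "follows_pattern (\<lambda>k. k \<in> peaks_upto K z) z"
  using assms unfolding follows_pattern_def peaks_upto_def by (auto simp: not_le)

lemma common_pattern_subsequence:
  fixes xs :: "nat \<Rightarrow> nat \<Rightarrow> 'a::real_normed_vector"
  assumes "\<forall>m\<ge>m0. \<forall>k>K. norm (xs m k) / real k \<le> tnorm (xs m) (k - 1)"
  obtains p M where "infinite M" "\<forall>k>K. \<not> p k" "\<forall>m\<in>M. follows_pattern p (xs m)"
proof -
  obtain m1 where M: "infinite {m\<in>{m0..}. peaks_upto K (xs m) = peaks_upto K (xs m1)}"
      (is "infinite ?M")
    by (rule pigeonhole_infinite[OF infinite_Ici, THEN bexE, of "\<lambda>m. peaks_upto K (xs m)"])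
      (auto intro: finite_subset[of _ "Pow {2..K}"] simp: peaks_upto_def)
  define p where "p k \<longleftrightarrow> k \<in> peaks_upto K (xs m1)" for k
  have "\<forall>m\<in>?M. follows_pattern p (xs m)"
  proof
    fix m assume "m \<in> ?M"
    then have "m \<ge> m0" and same: "peaks_upto K (xs m) = peaks_upto K (xs m1)" by auto
    have "\<forall>k>K. norm (xs m k) / real k \<le> tnorm (xs m) (k - 1)"
      using assms \<open>m \<ge> m0\<close> by blast
    from follows_peaks_upto[OF this] show "follows_pattern p (xs m)"
      unfolding same p_def .
  qed
  moreover have "\<forall>k>K. \<not> p k" by (simp add: p_def peaks_upto_def)
  ultimately show thesis by (intro that[OF M])
qed

lemma tnorm_pos_if_nonzero:
  assumes "z 0 = 0" "z \<noteq> (\<lambda>_. 0)"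
  obtains n where "n \<ge> 1" "0 < tnorm z n"
proof -
  obtain n where z_n: "z n \<noteq> 0" using assms(2) by auto
  with assms(1) have n: "n \<ge> 1" by (cases n) auto
  moreover have "0 < tnorm z n"
    using norm_le_tnorm[OF n, of z] z_n zero_less_norm_iff[of "z n"] by linarith
  ultimately show thesis by (rule that)
qed

lemma uniform_tail_no_peaks:
  assumes "pconv xs x" "n0 \<ge> 1" "0 < tnorm x n0"
    and "\<And>m. summable (\<lambda>n. norm (xs m n))" "\<And>m. Xnorm (xs m) \<le> B"
  obtains K m0 where "\<forall>m\<ge>m0. \<forall>k>K. norm (xs m k) / real k \<le> tnorm (xs m) (k - 1)"
proof -
  define \<delta> where "\<delta> = tnorm x n0 / 2"
  have \<delta>: "0 < \<delta>" using assms(3) by (simp add: \<delta>_def)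
  obtain m0 where lower: "\<And>m. m \<ge> m0 \<Longrightarrow> \<delta> \<le> tnorm (xs m) n0"
    using order_tendstoD(1)[OF tnorm_tendsto_pconv[OF assms(1)], of \<delta> n0] assms(3)
    unfolding \<delta>_def eventually_sequentially by (auto intro: less_imp_le)
  obtain K :: nat where K: "max (real n0) (2 * B / \<delta>) < real K"
    using reals_Archimedean2 by blast
  have "norm (xs m k) / real k \<le> tnorm (xs m) (k - 1)" if "m \<ge> m0" "K < k" for m k
  proof (intro less_imp_le tnorm_tail_no_peak[OF assms(4,5) lower[OF that(1)]])
    have "max (real n0) (2 * B / \<delta>) < real k" using K that(2) by linarith
    with \<delta> show "n0 < k" "2 * B < \<delta> * real k"
      by (auto simp: pos_divide_less_eq mult.commute)
  qed
  then show thesis using that[of m0 K] by blast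
qed

theorem proposition1p10:
  fixes S :: "nat \<Rightarrow> 'a::banach set"
    and xs :: "nat \<Rightarrow> nat \<Rightarrow> 'a" and x :: "nat \<Rightarrow> 'a"
  assumes "banach_family S"
    and "\<forall>m. xs m \<in> Xspace S"
    and "\<exists>B. \<forall>m. Xnorm (xs m) \<le> B"
    and "x \<in> Xspace S" and "x \<noteq> (\<lambda>_. 0)"
    and "pconv xs x"
  shows "\<exists>M::nat set. infinite M \<and> same_repr (xs ` M \<union> {x})"
proof -
  obtain B where B: "\<And>m. Xnorm (xs m) \<le> B" using assms(3) by blast
  have summable: "summable (\<lambda>n. norm (xs m n))" "summable (\<lambda>n. norm (x n))" for m
    using assms(2,4) unfolding Xspace_def by auto
  have "x 0 = 0" using assms(4) unfolding Xspace_def by simp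
  then obtain n0 where "n0 \<ge> 1" "0 < tnorm x n0"
    using assms(5) by (rule tnorm_pos_if_nonzero)
  then obtain K m0 where "\<forall>m\<ge>m0. \<forall>k>K. norm (xs m k) / real k \<le> tnorm (xs m) (k - 1)"
    using uniform_tail_no_peaks[OF assms(6) _ _ summable(1) B] by metis
  then obtain p M where M: "infinite M" and "\<forall>k>K. \<not> p k" "\<forall>m\<in>M. follows_pattern p (xs m)"
    by (rule common_pattern_subsequence)
  moreover from this have "follows_pattern p x"
    using follows_pattern_pconv_limit[OF assms(6) M] by blast
  ultimately have "same_repr (xs ` M \<union> {x})"
    using summable by (intro same_repr_if_common_pattern) auto
  with M show ?thesis by blast
qed

end
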